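(* Let $\mathcal{V}$ be a non-trivial quantale, $\mathsf{F}\colon\mathbf{Set}\to\mathbf{Set}$ a functor, and $\widehat{\mathsf{F}}$ a lax extension of $\mathsf{F}$ to $\mathbf{Rel}(\mathcal{V})$. Every predicate lifting for $\mathsf{F}$ induced by $\widehat{\mathsf{F}}$ is compatible with the lifting of $\mathsf{F}$ to $\mathbf{Cat}(\mathcal{V})$ induced by $\widehat{\mathsf{F}}$.
   Context: A quantale $(\mathcal{V},\otimes,k)$ is a complete lattice with commutative monoid structure, each $u\otimes-$ preserving joins, $\hom(u,-)$ its right adjoint; non-trivial: $\bot\ne\top$. $\mathcal{V}$-categories $(X,a)$: $k\le a(x,x)$, $a(x,y)\otimes a(y,z)\le a(x,z)$; $\mathcal{V}$-functors: $a(x,y)\le b(fx,fy)$. $\mathcal{V}$-relations $r\colon X\nrightarrow Y$ are maps $X\times Y\to\mathcal{V}$, composed by $(s\cdot r)(x,z)=\bigvee_y r(x,y)\otimes s(y,z)$, converse $r^\circ(y,x)=r(x,y)$, functions as relations with value $k$ on the graph and $\bot$ elsewhere. A lax extension of $\mathsf{F}$ assigns to each $r\colon X\nrightarrow Y$ a $\widehat{\mathsf{F}}r\colon\mathsf{F}X\nrightarrow\mathsf{F}Y$ with (L1) $r\le r'\Rightarrow\widehat{\mathsf{F}}r\le\widehat{\mathsf{F}}r'$, (L2) $\widehat{\mathsf{F}}s\cdot\widehat{\mathsf{F}}r\le\widehat{\mathsf{F}}(s\cdot r)$, (L3) $\mathsf{F}f\le\widehat{\mathsf{F}}f$, $(\mathsf{F}f)^\circ\le\widehat{\mathsf{F}}(f^\circ)$;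 its induced lifting sends $(X,a)$ to $(\mathsf{F}X,\widehat{\mathsf{F}}a)$. A $\kappa$-ary $\mathcal{V}$-valued predicate lifting is a natural transformation $\lambda\colon\mathbf{Set}(-,\mathcal{V}^\kappa)\to\mathbf{Set}(\mathsf{F}-,\mathcal{V})$, viewed (identifying $f\colon X\to\mathcal{V}^\kappa$ with the relation $(i,x)\mapsto f(x)(i)$ and maps $\mathsf{F}X\to\mathcal{V}$ with relations $1\nrightarrow\mathsf{F}X$) as mapping relations $\kappa\nrightarrow X$ to relations $1\nrightarrow\mathsf{F}X$. $\lambda$ is induced by $\widehat{\mathsf{F}}$ if there is $\mathfrak{r}\colon1\nrightarrow\mathsf{F}\kappa$ with $\lambda(f)=\widehat{\mathsf{F}}f\cdot\mathfrak{r}$ for every $\mathcal{V}$-relation $f\colon\kappa\nrightarrow X$. $\lambda$ is compatible with a lifting $\overline{\mathsf{F}}$ if for every $\mathcal{V}$-category $X$ and $\mathcal{V}$-functor $f\colon X\to\mathcal{V}^\kappa$ (with $[f,g]=\bigwedge_i\hom(f(i),g(i))$ on $\mathcal{V}^\kappa$), $\lambda_{|X|}(f)\colon\overline{\mathsf{F}}X\to(\mathcal{V},\hom)$ is a $\mathcal{V}$-functor. *)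

theory Defs
  imports Main "HOL-Library.FuncSet"
begin

definition quantale :: "('v::complete_lattice \<Rightarrow> 'v \<Rightarrow> 'v) \<Rightarrow> 'v \<Rightarrow> bool" where
  "quantale t k \<longleftrightarrow>
     (\<forall>a b c. t (t a b) c = t a (t b c)) \<and> (\<forall>a b. t a b = t b a) \<and> (\<forall>a. t k a = a) \<and>
     (\<forall>u A. t u (Sup A) = Sup (t u ` A))"

definition qhom :: "('v::complete_lattice \<Rightarrow> 'v \<Rightarrow> 'v) \<Rightarrow> 'v \<Rightarrow> 'v \<Rightarrow> 'v" where
  "qhom t u v = Sup {w. t u w \<le> v}"

definition vcomp :: "('v::complete_lattice \<Rightarrow> 'v \<Rightarrow> 'v) \<Rightarrow> 'b set \<Rightarrow> ('b \<Rightarrow> 'c \<Rightarrow> 'v) \<Rightarrow> ('a \<Rightarrow> 'b \<Rightarrow> 'v) \<Rightarrow> 'a \<Rightarrow> 'c \<Rightarrow> 'v" where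
  "vcomp t Y s r = (\<lambda>x z. SUP y\<in>Y. t (r x y) (s y z))"

definition vconv :: "('a \<Rightarrow> 'b \<Rightarrow> 'v) \<Rightarrow> 'b \<Rightarrow> 'a \<Rightarrow> 'v" where
  "vconv r = (\<lambda>y x. r x y)"

definition vgraph :: "'v::complete_lattice \<Rightarrow> ('a \<Rightarrow> 'b) \<Rightarrow> 'a \<Rightarrow> 'b \<Rightarrow> 'v" where
  "vgraph k f = (\<lambda>x y. if f x = y then k else bot)"

text \<open>A functor on Set, modelled on the sets of a universe type 'u:
  object part Fob, morphism part Fmor X Y f for f : X \<rightarrow> Y.\<close>
definition set_functor :: "('u set \<Rightarrow> 'f set) \<Rightarrow> ('u set \<Rightarrow> 'u set \<Rightarrow> ('u \<Rightarrow> 'u) \<Rightarrow> 'f \<Rightarrow> 'f) \<Rightarrow> bool" where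
  "set_functor Fob Fmor \<longleftrightarrow>
     (\<forall>X Y f. f \<in> X \<rightarrow> Y \<longrightarrow> Fmor X Y f \<in> Fob X \<rightarrow> Fob Y) \<and>
     (\<forall>X Y f g. (\<forall>x\<in>X. f x = g x) \<longrightarrow> (\<forall>\<xx>\<in>Fob X. Fmor X Y f \<xx> = Fmor X Y g \<xx>)) \<and>
     (\<forall>X. \<forall>\<xx>\<in>Fob X. Fmor X X id \<xx> = \<xx>) \<and>
     (\<forall>X Y Z f g. f \<in> X \<rightarrow> Y \<longrightarrow> g \<in> Y \<rightarrow> Z \<longrightarrow>
        (\<forall>\<xx>\<in>Fob X. Fmor X Z (g \<circ> f) \<xx> = Fmor Y Z g (Fmor X Y f \<xx>)))"

definition lax_extension ::
  "('v::complete_lattice \<Rightarrow> 'v \<Rightarrow> 'v) \<Rightarrow> 'v \<Rightarrow> ('u set \<Rightarrow> 'f set) \<Rightarrow> ('u set \<Rightarrow> 'u set \<Rightarrow> ('u \<Rightarrow> 'u) \<Rightarrow> 'f \<Rightarrow> 'f)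
   \<Rightarrow> ('u set \<Rightarrow> 'u set \<Rightarrow> ('u \<Rightarrow> 'u \<Rightarrow> 'v) \<Rightarrow> 'f \<Rightarrow> 'f \<Rightarrow> 'v) \<Rightarrow> bool" where
  "lax_extension t k Fob Fmor Fhat \<longleftrightarrow>
     (\<forall>X Y r r'. (\<forall>x\<in>X. \<forall>y\<in>Y. r x y \<le> r' x y) \<longrightarrow>
        (\<forall>\<xx>\<in>Fob X. \<forall>\<yy>\<in>Fob Y. Fhat X Y r \<xx> \<yy> \<le> Fhat X Y r' \<xx> \<yy>)) \<and>
     (\<forall>X Y Z r s. \<forall>\<xx>\<in>Fob X. \<forall>\<zz>\<in>Fob Z.
        vcomp t (Fob Y) (Fhat Y Z s) (Fhat X Y r) \<xx> \<zz> \<le> Fhat X Z (vcomp t Y s r) \<xx> \<zz>) \<and>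
     (\<forall>X Y f. f \<in> X \<rightarrow> Y \<longrightarrow> (\<forall>\<xx>\<in>Fob X. \<forall>\<yy>\<in>Fob Y.
        vgraph k (Fmor X Y f) \<xx> \<yy> \<le> Fhat X Y (vgraph k f) \<xx> \<yy> \<and>
        vconv (vgraph k (Fmor X Y f)) \<yy> \<xx> \<le> Fhat Y X (vconv (vgraph k f)) \<yy> \<xx>))"

text \<open>K-ary predicate lifting: lam X r : F X \<rightarrow> V for r : K -/-> X (r i x = f(x)(i)).\<close>
definition pred_lifting ::
  "('u set \<Rightarrow> 'f set) \<Rightarrow> ('u set \<Rightarrow> 'u set \<Rightarrow> ('u \<Rightarrow> 'u) \<Rightarrow> 'f \<Rightarrow> 'f) \<Rightarrow> 'u set
   \<Rightarrow> ('u set \<Rightarrow> ('u \<Rightarrow> 'u \<Rightarrow> 'v) \<Rightarrow> 'f \<Rightarrow> 'v) \<Rightarrow> bool" where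
  "pred_lifting Fob Fmor K lam \<longleftrightarrow>
     (\<forall>X r r'. (\<forall>i\<in>K. \<forall>x\<in>X. r i x = r' i x) \<longrightarrow> (\<forall>\<xx>\<in>Fob X. lam X r \<xx> = lam X r' \<xx>)) \<and>
     (\<forall>X Y g r. g \<in> X \<rightarrow> Y \<longrightarrow>
        (\<forall>\<xx>\<in>Fob X. lam X (\<lambda>i x. r i (g x)) \<xx> = lam Y r (Fmor X Y g \<xx>)))"

text \<open>lam is induced by Fhat: lam(f) = Fhat f . \<rho> for some \<rho> : 1 -/-> F K.\<close>
definition induced_by ::
  "('v::complete_lattice \<Rightarrow> 'v \<Rightarrow> 'v) \<Rightarrow> ('u set \<Rightarrow> 'f set)
   \<Rightarrow> ('u set \<Rightarrow> 'u set \<Rightarrow> ('u \<Rightarrow> 'u \<Rightarrow> 'v) \<Rightarrow> 'f \<Rightarrow> 'f \<Rightarrow> 'v) \<Rightarrow> 'u set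
   \<Rightarrow> ('u set \<Rightarrow> ('u \<Rightarrow> 'u \<Rightarrow> 'v) \<Rightarrow> 'f \<Rightarrow> 'v) \<Rightarrow> bool" where
  "induced_by t Fob Fhat K lam \<longleftrightarrow>
     (\<exists>\<rho> :: 'f \<Rightarrow> 'v. \<forall>X r. \<forall>\<xx>\<in>Fob X.
        lam X r \<xx> = (SUP \<kk>\<in>Fob K. t (\<rho> \<kk>) (Fhat K X r \<kk> \<xx>)))"

definition vcategory :: "('v::complete_lattice \<Rightarrow> 'v \<Rightarrow> 'v) \<Rightarrow> 'v \<Rightarrow> 'a set \<Rightarrow> ('a \<Rightarrow> 'a \<Rightarrow> 'v) \<Rightarrow> bool" where
  "vcategory t k X a \<longleftrightarrow> (\<forall>x\<in>X. k \<le> a x x) \<and> (\<forall>x\<in>X. \<forall>y\<in>X. \<forall>z\<in>X. t (a x y) (a y z) \<le> a x z)"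

definition vfunctor :: "'a set \<Rightarrow> ('a \<Rightarrow> 'a \<Rightarrow> 'v::complete_lattice) \<Rightarrow> 'b set \<Rightarrow> ('b \<Rightarrow> 'b \<Rightarrow> 'v) \<Rightarrow> ('a \<Rightarrow> 'b) \<Rightarrow> bool" where
  "vfunctor X a Y b f \<longleftrightarrow> (\<forall>x\<in>X. f x \<in> Y) \<and> (\<forall>x\<in>X. \<forall>y\<in>X. a x y \<le> b (f x) (f y))"

definition vpow_hom :: "('v::complete_lattice \<Rightarrow> 'v \<Rightarrow> 'v) \<Rightarrow> 'u set \<Rightarrow> ('u \<Rightarrow> 'v) \<Rightarrow> ('u \<Rightarrow> 'v) \<Rightarrow> 'v" where
  "vpow_hom t K \<phi> \<psi> = (INF i\<in>K. qhom t (\<phi> i) (\<psi> i))"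

text \<open>Compatibility of lam with the lifting X \<mapsto> (F X, Fhat a) induced by Fhat.\<close>
definition compatible ::
  "('v::complete_lattice \<Rightarrow> 'v \<Rightarrow> 'v) \<Rightarrow> 'v \<Rightarrow> ('u set \<Rightarrow> 'f set)
   \<Rightarrow> ('u set \<Rightarrow> 'u set \<Rightarrow> ('u \<Rightarrow> 'u \<Rightarrow> 'v) \<Rightarrow> 'f \<Rightarrow> 'f \<Rightarrow> 'v) \<Rightarrow> 'u set
   \<Rightarrow> ('u set \<Rightarrow> ('u \<Rightarrow> 'u \<Rightarrow> 'v) \<Rightarrow> 'f \<Rightarrow> 'v) \<Rightarrow> bool" where
  "compatible t k Fob Fhat K lam \<longleftrightarrow>
     (\<forall>X a r. vcategory t k X a \<longrightarrow> vfunctor X a UNIV (vpow_hom t K) (\<lambda>x i. r i x) \<longrightarrow>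
        vfunctor (Fob X) (Fhat X X a) UNIV (qhom t) (lam X r))"

end

theory Submission
  imports Defs
begin

text \<open>
  Write \<open>\<lambda>(r) = \<widehat>F r \<cdot> \<rho>\<close>. A \<open>\<V>\<close>-functor \<open>r : (X, a) \<rightarrow> \<V>\<^sup>K\<close> is exactly a \<open>\<V>\<close>-relation
  \<open>r : K \<nrightarrow> X\<close> with \<open>a \<cdot> r \<le> r\<close>. Applying \<open>\<widehat>F\<close> and using (L2) and (L1) gives
  \<open>\<widehat>F a \<cdot> \<widehat>F r \<le> \<widehat>F (a \<cdot> r) \<le> \<widehat>F r\<close>, and precomposing with \<open>\<rho>\<close> yields
  \<open>\<widehat>F a \<cdot> \<lambda>(r) \<le> \<lambda>(r)\<close>, which says that \<open>\<lambda>(r) : (F X, \<widehat>F a) \<rightarrow> (\<V>, hom)\<close> is a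
  \<open>\<V>\<close>-functor. Only (L1) and (L2) are needed, and \<open>a\<close> need not even be a \<open>\<V>\<close>-category.
\<close>

lemma quantale_tensor_mono:
  fixes t :: "'v::complete_lattice \<Rightarrow> 'v \<Rightarrow> 'v"
  assumes "quantale t k" and "a \<le> b"
  shows "t u a \<le> t u b"
proof -
  have "t u (Sup {a, b}) = Sup (t u ` {a, b})"
    using assms(1) unfolding quantale_def by blast
  then have "t u b = sup (t u a) (t u b)"
    using assms(2) by (simp add: sup_absorb2)
  then show ?thesis
    by (metis sup.cobounded1)
qed

lemma quantale_SUP_tensor:
  fixes t :: "'v::complete_lattice \<Rightarrow> 'v \<Rightarrow> 'v"
  assumes "quantale t k"
  shows "t (SUP x\<in>A. f x) c = (SUP x\<in>A. t (f x) c)"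
proof -
  have "t c (Sup (f ` A)) = Sup (t c ` f ` A)"
    using assms unfolding quantale_def by blast
  moreover have "\<And>a b. t a b = t b a"
    using assms unfolding quantale_def by blast
  ultimately show ?thesis
    by (simp add: image_image)
qed

lemma quantale_le_qhom_iff:
  fixes t :: "'v::complete_lattice \<Rightarrow> 'v \<Rightarrow> 'v"
  assumes "quantale t k"
  shows "w \<le> qhom t u v \<longleftrightarrow> t u w \<le> v"
proof
  assume "t u w \<le> v"
  then show "w \<le> qhom t u v"
    unfolding qhom_def by (auto intro: Sup_upper)
next
  assume "w \<le> qhom t u v"
  then have "t u w \<le> t u (qhom t u v)"
    by (rule quantale_tensor_mono[OF assms])
  also have "t u (qhom t u v) = Sup (t u ` {w. t u w \<le> v})"
    using assms unfolding quantale_def qhom_def by blast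
  also have "\<dots> \<le> v"
    by (auto intro: Sup_least)
  finally show "t u w \<le> v" .
qed

lemma quantale_tensor_SUP_tensor_le:
  fixes t :: "'v::complete_lattice \<Rightarrow> 'v \<Rightarrow> 'v"
  assumes "quantale t k"
    and "\<And>x. x \<in> A \<Longrightarrow> t (f x) b \<le> g x"
  shows "t (SUP x\<in>A. t (c x) (f x)) b \<le> (SUP x\<in>A. t (c x) (g x))"
proof -
  have assoc: "\<And>u v w. t (t u v) w = t u (t v w)"
    using assms(1) unfolding quantale_def by blast
  have "t (SUP x\<in>A. t (c x) (f x)) b = (SUP x\<in>A. t (c x) (t (f x) b))"
    by (simp add: quantale_SUP_tensor[OF assms(1)] assoc)
  also have "\<dots> \<le> (SUP x\<in>A. t (c x) (g x))"
    by (rule SUP_subset_mono[OF order_refl quantale_tensor_mono[OF assms(1) assms(2)]])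
  finally show ?thesis .
qed

lemma vfunctor_vpow_hom_vcomp_le:
  assumes "quantale t k"
    and "vfunctor X a UNIV (vpow_hom t K) (\<lambda>x i. r i x)"
    and "i \<in> K" and "z \<in> X"
  shows "vcomp t X a r i z \<le> r i z"
  unfolding vcomp_def
proof (rule SUP_least)
  fix y assume "y \<in> X"
  then have "a y z \<le> vpow_hom t K (\<lambda>i. r i y) (\<lambda>i. r i z)"
    using assms(2,4) unfolding vfunctor_def by blast
  also have "\<dots> \<le> qhom t (r i y) (r i z)"
    unfolding vpow_hom_def using assms(3) by (rule INF_lower)
  finally show "t (r i y) (a y z) \<le> r i z"
    using quantale_le_qhom_iff[OF assms(1)] by blast
qed

lemma lax_extension_mono:
  assumes "lax_extension t k Fob Fmor Fhat"
    and "\<And>x y. x \<in> X \<Longrightarrow> y \<in> Y \<Longrightarrow> r x y \<le> r' x y"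
    and "\<xx> \<in> Fob X" and "\<yy> \<in> Fob Y"
  shows "Fhat X Y r \<xx> \<yy> \<le> Fhat X Y r' \<xx> \<yy>"
  using conjunct1[OF assms(1)[unfolded lax_extension_def]] assms(2-4) by simp

lemma lax_extension_vcomp_le:
  assumes "lax_extension t k Fob Fmor Fhat"
    and "\<xx> \<in> Fob X" and "\<zz> \<in> Fob Z"
  shows "vcomp t (Fob Y) (Fhat Y Z s) (Fhat X Y r) \<xx> \<zz> \<le> Fhat X Z (vcomp t Y s r) \<xx> \<zz>"
  using conjunct1[OF conjunct2[OF assms(1)[unfolded lax_extension_def]]] assms(2,3) by simp

lemma lax_extension_tensor_le:
  assumes "lax_extension t k Fob Fmor Fhat"
    and "\<And>x z. x \<in> X \<Longrightarrow> z \<in> Z \<Longrightarrow> vcomp t Y s r x z \<le> r' x z"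
    and "\<xx> \<in> Fob X" and "\<yy> \<in> Fob Y" and "\<zz> \<in> Fob Z"
  shows "t (Fhat X Y r \<xx> \<yy>) (Fhat Y Z s \<yy> \<zz>) \<le> Fhat X Z r' \<xx> \<zz>"
proof -
  have "t (Fhat X Y r \<xx> \<yy>) (Fhat Y Z s \<yy> \<zz>) \<le> vcomp t (Fob Y) (Fhat Y Z s) (Fhat X Y r) \<xx> \<zz>"
    unfolding vcomp_def using assms(4) by (rule SUP_upper2) simp
  also have "\<dots> \<le> Fhat X Z (vcomp t Y s r) \<xx> \<zz>"
    using assms(1,3,5) by (rule lax_extension_vcomp_le)
  also have "\<dots> \<le> Fhat X Z r' \<xx> \<zz>"
    using assms(1,2,3,5) by (rule lax_extension_mono)
  finally show ?thesis .
qed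

theorem proposition6:
  fixes t :: "'v::complete_lattice \<Rightarrow> 'v \<Rightarrow> 'v" and k :: 'v
    and Fob :: "'u set \<Rightarrow> 'f set"
    and Fmor :: "'u set \<Rightarrow> 'u set \<Rightarrow> ('u \<Rightarrow> 'u) \<Rightarrow> 'f \<Rightarrow> 'f"
    and Fhat :: "'u set \<Rightarrow> 'u set \<Rightarrow> ('u \<Rightarrow> 'u \<Rightarrow> 'v) \<Rightarrow> 'f \<Rightarrow> 'f \<Rightarrow> 'v"
    and K :: "'u set"
    and lam :: "'u set \<Rightarrow> ('u \<Rightarrow> 'u \<Rightarrow> 'v) \<Rightarrow> 'f \<Rightarrow> 'v"
  assumes "quantale t k"
    and "(bot :: 'v) \<noteq> top"
    and "set_functor Fob Fmor"
    and "lax_extension t k Fob Fmor Fhat"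
    and "pred_lifting Fob Fmor K lam"
    and "induced_by t Fob Fhat K lam"
  shows "compatible t k Fob Fhat K lam"
  unfolding compatible_def
proof (intro allI impI)
  fix X :: "'u set" and a r
  assume "vfunctor X a UNIV (vpow_hom t K) (\<lambda>x i. r i x)"
  then have absorb: "t (Fhat K X r \<kk> \<xx>) (Fhat X X a \<xx> \<yy>) \<le> Fhat K X r \<kk> \<yy>"
    if "\<kk> \<in> Fob K" "\<xx> \<in> Fob X" "\<yy> \<in> Fob X" for \<kk> \<xx> \<yy>
    by (rule lax_extension_tensor_le[OF assms(4) vfunctor_vpow_hom_vcomp_le[OF assms(1)]])
      (use that in auto)
  obtain \<rho> where \<rho>:
    "\<And>\<xx>. \<xx> \<in> Fob X \<Longrightarrow> lam X r \<xx> = (SUP \<kk>\<in>Fob K. t (\<rho> \<kk>) (Fhat K X r \<kk> \<xx>))"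
    using assms(6) unfolding induced_by_def by blast
  show "vfunctor (Fob X) (Fhat X X a) UNIV (qhom t) (lam X r)"
    unfolding vfunctor_def quantale_le_qhom_iff[OF assms(1)]
  proof (intro conjI ballI)
    fix \<xx> \<yy> assume "\<xx> \<in> Fob X" "\<yy> \<in> Fob X"
    then show "t (lam X r \<xx>) (Fhat X X a \<xx> \<yy>) \<le> lam X r \<yy>"
      unfolding \<rho>[OF \<open>\<xx> \<in> Fob X\<close>] \<rho>[OF \<open>\<yy> \<in> Fob X\<close>]
      by (intro quantale_tensor_SUP_tensor_le[OF assms(1)] absorb)
  qed simp
qed

end
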